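(* Let $M$ be a finite-horizon MDP with an offline dataset $\mathcal D$ and dataset-induced MDP $M_{\mathcal D}$, and let $\pi$ be batch-constrained with respect to $\mathcal D$. If $\max_{(s,a):\rho_\pi^{M_{\mathcal D}}(s,a)>0}\|P^{M_{\mathcal D}}(\cdot\mid s,a)-P^M(\cdot\mid s,a)\|_1\le\epsilon_P$ and $\max_{(s,a,r):\rho_\pi^{M_{\mathcal D}}(s,a)>0}|R^{M_{\mathcal D}}(r\mid s,a)-R^M(r\mid s,a)|\le\epsilon_R$, then $$\|\rho_\pi^M(s)-\rho_\pi^{M_{\mathcal D}}(s)\|_1+\|\rho_\pi^M(s,a,r)-\rho_\pi^{M_{\mathcal D}}(s,a,r)\|_1\le|\mathcal S|(|\mathcal A||\mathcal R|+1)\frac{H-1}{2}\epsilon_P+|\mathcal S||\mathcal A||\mathcal R|\epsilon_R.$$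
   Context: $M=(\mathcal S,\mathcal A,\mathcal R,H,P^M,R^M)$ is a finite-horizon MDP with finite spaces, fixed initial state $s_0$, state space partitioned into disjoint timestep layers $\mathcal S_h$. Visitation distributions: $\rho_\pi(s_0)=1/H$, $\rho_\pi(s)=\sum_{\tilde s\in\mathcal S_{h-1},\tilde a}\rho_\pi(\tilde s)\pi(\tilde a\mid\tilde s)P(s\mid\tilde s,\tilde a)$ for $s\in\mathcal S_h$, $h>0$; $\rho_\pi(s,a)=\rho_\pi(s)\pi(a\mid s)$; $\rho_\pi(s,a,r)=\rho_\pi(s,a)R(r\mid s,a)$. $M_{\mathcal D}$ has empirical transitions $N(s,a,s')/N(s,a)$ and rewards $N(s,a,r)/N(s,a)$ when $N(s,a)>0$ and $0$ otherwise ($N$ counts occurrences in $\mathcal D$). $\pi$ is batch-constrained if $\pi(a\mid s)=0$ whenever $(s,a)$ does not appear in $\mathcal D$. *)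

theory Defs
  imports Complex_Main
begin

text \<open>A transition kernel is P s a s' = P(s' | s, a); a reward kernel is R s a r = R(r | s, a);
  a policy is pol s a = pi(a | s).\<close>

type_synonym ('s,'a,'r) dataset = "('s \<times> 'a \<times> 'r \<times> 's) list"

definition N_sa :: "('s,'a,'r) dataset \<Rightarrow> 's \<Rightarrow> 'a \<Rightarrow> nat" where
  "N_sa D s a = length (filter (\<lambda>(s1,a1,r1,t1). s1 = s \<and> a1 = a) D)"

definition N_sas :: "('s,'a,'r) dataset \<Rightarrow> 's \<Rightarrow> 'a \<Rightarrow> 's \<Rightarrow> nat" where
  "N_sas D s a t = length (filter (\<lambda>(s1,a1,r1,t1). s1 = s \<and> a1 = a \<and> t1 = t) D)"

definition N_sar :: "('s,'a,'r) dataset \<Rightarrow> 's \<Rightarrow> 'a \<Rightarrow> 'r \<Rightarrow> nat" where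
  "N_sar D s a r = length (filter (\<lambda>(s1,a1,r1,t1). s1 = s \<and> a1 = a \<and> r1 = r) D)"

definition P_D :: "('s,'a,'r) dataset \<Rightarrow> 's \<Rightarrow> 'a \<Rightarrow> 's \<Rightarrow> real" where
  "P_D D s a t = (if N_sa D s a > 0 then real (N_sas D s a t) / real (N_sa D s a) else 0)"

definition R_D :: "('s,'a,'r) dataset \<Rightarrow> 's \<Rightarrow> 'a \<Rightarrow> 'r \<Rightarrow> real" where
  "R_D D s a r = (if N_sa D s a > 0 then real (N_sar D s a r) / real (N_sa D s a) else 0)"

definition batch_constrained :: "('s,'a,'r) dataset \<Rightarrow> ('s \<Rightarrow> 'a \<Rightarrow> real) \<Rightarrow> bool" where
  "batch_constrained D pol \<longleftrightarrow> (\<forall>s a. (\<forall>r t. (s,a,r,t) \<notin> set D) \<longrightarrow> pol s a = 0)"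

fun rho_layer :: "nat \<Rightarrow> ('s \<Rightarrow> nat) \<Rightarrow> 's \<Rightarrow> ('s \<Rightarrow> 'a \<Rightarrow> 's \<Rightarrow> real)
    \<Rightarrow> ('s \<Rightarrow> 'a \<Rightarrow> real) \<Rightarrow> nat \<Rightarrow> 's \<Rightarrow> real" where
  "rho_layer H layer s0 P pol 0 s = (if s = s0 then 1 / real H else 0)"
| "rho_layer H layer s0 P pol (Suc h) s =
     (\<Sum>s1\<in>{x. layer x = h}. \<Sum>a\<in>UNIV. rho_layer H layer s0 P pol h s1 * pol s1 a * P s1 a s)"

definition rho_s :: "nat \<Rightarrow> ('s \<Rightarrow> nat) \<Rightarrow> 's \<Rightarrow> ('s \<Rightarrow> 'a::finite \<Rightarrow> 's \<Rightarrow> real)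
    \<Rightarrow> ('s \<Rightarrow> 'a \<Rightarrow> real) \<Rightarrow> 's \<Rightarrow> real" where
  "rho_s H layer s0 P pol s = rho_layer H layer s0 P pol (layer s) s"

definition rho_sa :: "nat \<Rightarrow> ('s \<Rightarrow> nat) \<Rightarrow> 's \<Rightarrow> ('s \<Rightarrow> 'a::finite \<Rightarrow> 's \<Rightarrow> real)
    \<Rightarrow> ('s \<Rightarrow> 'a \<Rightarrow> real) \<Rightarrow> 's \<Rightarrow> 'a \<Rightarrow> real" where
  "rho_sa H layer s0 P pol s a = rho_s H layer s0 P pol s * pol s a"

definition rho_sar :: "nat \<Rightarrow> ('s \<Rightarrow> nat) \<Rightarrow> 's \<Rightarrow> ('s \<Rightarrow> 'a::finite \<Rightarrow> 's \<Rightarrow> real)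
    \<Rightarrow> ('s \<Rightarrow> 'a \<Rightarrow> 'r \<Rightarrow> real) \<Rightarrow> ('s \<Rightarrow> 'a \<Rightarrow> real) \<Rightarrow> 's \<Rightarrow> 'a \<Rightarrow> 'r \<Rightarrow> real" where
  "rho_sar H layer s0 P R pol s a r = rho_sa H layer s0 P pol s a * R s a r"

end

theory Submission
  imports Defs
begin

text \<open>Write \<open>\<rho>\<^sub>h\<close> for the visitation of layer \<open>h\<close>. Both MDPs share \<open>\<rho>\<^sub>0\<close>, and one
  step of the recursion splits \<open>\<rho>\<^sub>h P - \<rho>'\<^sub>h P'\<close> into \<open>(\<rho>\<^sub>h - \<rho>'\<^sub>h) P\<close>, which the stochastic
  kernel \<open>P\<close> does not enlarge in \<open>\<ell>\<^sub>1\<close>, plus \<open>\<rho>'\<^sub>h (P - P')\<close>, of norm at most \<open>\<epsilon>\<^sub>P\<close> times the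
  mass \<open>\<le> 1/H\<close> of \<open>\<rho>'\<^sub>h\<close>. So the layer-\<open>h\<close> discrepancy is at most \<open>h \<epsilon>\<^sub>P / H\<close>, and summing
  over the \<open>H\<close> layers bounds the state discrepancy by \<open>(H - 1) \<epsilon>\<^sub>P / 2\<close>. The same splitting
  applied to the factor \<open>\<pi> R\<close> bounds the state-action-reward discrepancy by the state discrepancy
  plus \<open>|\<R>| \<epsilon>\<^sub>R\<close>; the constants of the theorem are a crude upper bound for the total.\<close>

lemma N_sas_sum: "(\<Sum>t\<in>(UNIV :: 's::finite set). N_sas D s a t) = N_sa D s a"
proof (induction D)
  case Nil
  then show ?case by (simp add: N_sas_def N_sa_def)
next
  case (Cons x D)
  obtain s1 a1 r1 t1 where x: "x = (s1, a1, r1, t1)" by (cases x) auto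
  have "(\<Sum>t\<in>UNIV. N_sas (x # D) s a t)
      = (\<Sum>t\<in>UNIV. (if s1 = s \<and> a1 = a \<and> t1 = t then 1 else 0) + N_sas D s a t)"
    by (intro sum.cong refl) (simp add: N_sas_def x)
  also have "\<dots> = (if s1 = s \<and> a1 = a then 1 else 0) + N_sa D s a"
    by (auto simp: sum.distrib Cons)
  also have "\<dots> = N_sa (x # D) s a" by (simp add: N_sa_def x)
  finally show ?case .
qed

lemma P_D_nonneg: "0 \<le> P_D D s a t"
  by (simp add: P_D_def)

lemma P_D_sum_le_1: "(\<Sum>t\<in>(UNIV :: 's::finite set). P_D D s a t) \<le> 1"
proof (cases "N_sa D s a > 0")
  case True
  have "(\<Sum>t\<in>UNIV. P_D D s a t) = (\<Sum>t\<in>UNIV. real (N_sas D s a t)) / real (N_sa D s a)"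
    using True by (simp add: P_D_def sum_divide_distrib)
  also have "\<dots> = 1"
    using True by (simp only: of_nat_sum[symmetric] N_sas_sum) simp
  finally show ?thesis by simp
qed (simp add: P_D_def)

lemma mult_left_mono_if_pos:
  fixes x y e :: real
  assumes "0 \<le> x" and "0 < x \<Longrightarrow> y \<le> e"
  shows "x * y \<le> x * e"
  using assms by (cases "x = 0") (auto intro: mult_left_mono)

lemma sum_by_layer_le:
  fixes f :: "nat \<Rightarrow> 's::finite \<Rightarrow> real"
  assumes "\<And>s. layer s < H" and "\<And>h s. 0 \<le> f h s"
  shows "(\<Sum>s\<in>UNIV. f (layer s) s) \<le> (\<Sum>h<H. \<Sum>s\<in>UNIV. f h s)"
proof -
  have "(\<Sum>s\<in>UNIV. f (layer s) s) = (\<Sum>h<H. \<Sum>s\<in>{x. layer x = h}. f h s)"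
    using sum.group[of UNIV "{..<H}" layer "\<lambda>s. f (layer s) s"] assms(1)
    by (simp add: image_subset_iff)
  also have "\<dots> \<le> (\<Sum>h<H. \<Sum>s\<in>UNIV. f h s)"
    using assms(2) by (intro sum_mono sum_mono2) auto
  finally show ?thesis .
qed

lemma card_UNIV_constants_le:
  fixes x y :: real
  assumes "0 \<le> x" and "0 \<le> y"
  defines "cS \<equiv> real (card (UNIV :: 's::finite set))" and "cA \<equiv> real (card (UNIV :: 'a::finite set))"
    and "cR \<equiv> real (card (UNIV :: 'r::finite set))"
  shows "2 * x + cR * y \<le> cS * (cA * cR + 1) * x + cS * cA * cR * y"
proof -
  have "1 \<le> cS" "1 \<le> cA" "1 \<le> cR"
    by (simp_all add: cS_def cA_def cR_def Suc_le_eq finite_UNIV_card_ge_0)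
  then have "1 \<le> cA * cR" and "1 \<le> cS * cA"
    using mult_mono[of 1 cA 1 cR] mult_mono[of 1 cS 1 cA] by simp_all
  then have "2 \<le> cS * (cA * cR + 1)" and "cR \<le> cS * cA * cR"
    using \<open>1 \<le> cS\<close> \<open>1 \<le> cR\<close> mult_mono[of 1 cS 2 "cA * cR + 1"] mult_right_mono[of 1 "cS * cA" cR]
    by simp_all
  then show ?thesis
    using assms by (intro add_mono mult_right_mono)
qed

locale layered_visitation =
  fixes H :: nat and layer :: "'s::finite \<Rightarrow> nat" and s0 :: 's
    and pol :: "'s \<Rightarrow> 'a::finite \<Rightarrow> real"
  assumes pol_nonneg: "\<And>s a. 0 \<le> pol s a" and pol_sum: "\<And>s. (\<Sum>a\<in>UNIV. pol s a) = 1"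
begin

lemma rho_layer_nonneg:
  assumes "\<And>s a t. 0 \<le> P s a t"
  shows "0 \<le> rho_layer H layer s0 P pol h s"
  using assms pol_nonneg
  by (induction h arbitrary: s) (auto intro!: sum_nonneg mult_nonneg_nonneg)

lemma rho_layer_Suc_diff_le:
  assumes P_nonneg: "\<And>s a t. 0 \<le> P s a t" and Q_nonneg: "\<And>s a t. 0 \<le> Q s a t"
  defines "\<rho>P \<equiv> rho_layer H layer s0 P pol" and "\<rho>Q \<equiv> rho_layer H layer s0 Q pol"
  shows "\<bar>\<rho>P (Suc h) s - \<rho>Q (Suc h) s\<bar>
    \<le> (\<Sum>s1\<in>{x. layer x = h}. \<Sum>a\<in>UNIV. \<bar>\<rho>P h s1 - \<rho>Q h s1\<bar> * pol s1 a * P s1 a s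
                                         + \<rho>Q h s1 * pol s1 a * \<bar>Q s1 a s - P s1 a s\<bar>)"
proof -
  have split: "\<rho>P (Suc h) s - \<rho>Q (Suc h) s
      = (\<Sum>s1\<in>{x. layer x = h}. \<Sum>a\<in>UNIV. (\<rho>P h s1 - \<rho>Q h s1) * pol s1 a * P s1 a s
                                         + \<rho>Q h s1 * pol s1 a * (P s1 a s - Q s1 a s))"
    unfolding \<rho>P_def \<rho>Q_def rho_layer.simps sum_subtractf[symmetric]
    by (intro sum.cong refl) (simp add: algebra_simps)
  have "\<bar>\<rho>P (Suc h) s - \<rho>Q (Suc h) s\<bar> \<le> (\<Sum>s1\<in>{x. layer x = h}. \<Sum>a\<in>UNIV.
      \<bar>(\<rho>P h s1 - \<rho>Q h s1) * pol s1 a * P s1 a s + \<rho>Q h s1 * pol s1 a * (P s1 a s - Q s1 a s)\<bar>)"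
    unfolding split by (rule order_trans[OF sum_abs sum_mono], rule sum_abs)
  also have "\<dots> \<le> (\<Sum>s1\<in>{x. layer x = h}. \<Sum>a\<in>UNIV. \<bar>\<rho>P h s1 - \<rho>Q h s1\<bar> * pol s1 a * P s1 a s
                                         + \<rho>Q h s1 * pol s1 a * \<bar>Q s1 a s - P s1 a s\<bar>)"
  proof (intro sum_mono)
    fix s1 a
    have "0 \<le> \<rho>Q h s1" unfolding \<rho>Q_def by (rule rho_layer_nonneg[OF Q_nonneg])
    then show "\<bar>(\<rho>P h s1 - \<rho>Q h s1) * pol s1 a * P s1 a s + \<rho>Q h s1 * pol s1 a * (P s1 a s - Q s1 a s)\<bar>
      \<le> \<bar>\<rho>P h s1 - \<rho>Q h s1\<bar> * pol s1 a * P s1 a s + \<rho>Q h s1 * pol s1 a * \<bar>Q s1 a s - P s1 a s\<bar>"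
      using P_nonneg[of s1 a s] pol_nonneg[of s1 a] abs_triangle_ineq[of
        "(\<rho>P h s1 - \<rho>Q h s1) * pol s1 a * P s1 a s" "\<rho>Q h s1 * pol s1 a * (P s1 a s - Q s1 a s)"]
      by (simp add: abs_mult abs_minus_commute)
  qed
  finally show ?thesis .
qed

lemma rho_layer_mass_le:
  assumes P_nonneg: "\<And>s a t. 0 \<le> P s a t" and P_sum: "\<And>s a. (\<Sum>t\<in>UNIV. P s a t) \<le> 1"
  shows "(\<Sum>s\<in>UNIV. rho_layer H layer s0 P pol h s) \<le> 1 / real H"
proof (induction h)
  case (Suc h)
  let ?\<rho> = "rho_layer H layer s0 P pol h"
  have "(\<Sum>s\<in>UNIV. rho_layer H layer s0 P pol (Suc h) s)
      = (\<Sum>s1\<in>{x. layer x = h}. \<Sum>a\<in>UNIV. \<Sum>s\<in>UNIV. ?\<rho> s1 * pol s1 a * P s1 a s)"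
    unfolding rho_layer.simps
    by (subst sum.swap) (intro sum.cong refl sum.swap)
  also have "\<dots> \<le> (\<Sum>s1\<in>{x. layer x = h}. \<Sum>a\<in>UNIV. ?\<rho> s1 * pol s1 a)"
    using P_nonneg P_sum pol_nonneg rho_layer_nonneg
    by (intro sum_mono) (simp add: mult_left_le flip: sum_distrib_left)
  also have "\<dots> \<le> (\<Sum>s1\<in>UNIV. ?\<rho> s1)"
    using P_nonneg rho_layer_nonneg
    by (simp add: pol_sum flip: sum_distrib_left) (intro sum_mono2, auto)
  finally show ?case using Suc by simp
qed simp

lemma rho_layer_dist_Suc_le:
  assumes P_nonneg: "\<And>s a t. 0 \<le> P s a t" and P_sum: "\<And>s a. (\<Sum>t\<in>UNIV. P s a t) \<le> 1"
    and Q_nonneg: "\<And>s a t. 0 \<le> Q s a t" and "0 \<le> \<epsilon>"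
    and Q_close: "\<And>s a. 0 < rho_sa H layer s0 Q pol s a \<Longrightarrow> (\<Sum>t\<in>UNIV. \<bar>Q s a t - P s a t\<bar>) \<le> \<epsilon>"
  defines "\<rho>P \<equiv> rho_layer H layer s0 P pol" and "\<rho>Q \<equiv> rho_layer H layer s0 Q pol"
  shows "(\<Sum>s\<in>UNIV. \<bar>\<rho>P (Suc h) s - \<rho>Q (Suc h) s\<bar>)
    \<le> (\<Sum>s\<in>UNIV. \<bar>\<rho>P h s - \<rho>Q h s\<bar>) + \<epsilon> * (\<Sum>s\<in>UNIV. \<rho>Q h s)"
proof -
  have \<rho>Q_nonneg: "0 \<le> \<rho>Q h s" for s
    unfolding \<rho>Q_def by (rule rho_layer_nonneg[OF Q_nonneg])
  have "(\<Sum>s\<in>UNIV. \<bar>\<rho>P (Suc h) s - \<rho>Q (Suc h) s\<bar>)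
      \<le> (\<Sum>s\<in>UNIV. \<Sum>s1\<in>{x. layer x = h}. \<Sum>a\<in>UNIV. \<bar>\<rho>P h s1 - \<rho>Q h s1\<bar> * pol s1 a * P s1 a s
                                         + \<rho>Q h s1 * pol s1 a * \<bar>Q s1 a s - P s1 a s\<bar>)"
    unfolding \<rho>P_def \<rho>Q_def by (intro sum_mono rho_layer_Suc_diff_le P_nonneg Q_nonneg)
  also have "\<dots> = (\<Sum>s1\<in>{x. layer x = h}. \<Sum>a\<in>UNIV.
      \<bar>\<rho>P h s1 - \<rho>Q h s1\<bar> * pol s1 a * (\<Sum>s\<in>UNIV. P s1 a s)
      + \<rho>Q h s1 * pol s1 a * (\<Sum>s\<in>UNIV. \<bar>Q s1 a s - P s1 a s\<bar>))"
    unfolding sum_distrib_left sum.distrib[symmetric]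
    by (subst sum.swap) (intro sum.cong refl sum.swap)
  also have "\<dots> \<le> (\<Sum>s1\<in>{x. layer x = h}. \<Sum>a\<in>UNIV.
      \<bar>\<rho>P h s1 - \<rho>Q h s1\<bar> * pol s1 a + \<rho>Q h s1 * pol s1 a * \<epsilon>)"
  proof (intro sum_mono add_mono)
    fix s1 a
    assume "s1 \<in> {x. layer x = h}"
    then have "rho_sa H layer s0 Q pol s1 a = \<rho>Q h s1 * pol s1 a"
      by (simp add: rho_sa_def rho_s_def \<rho>Q_def)
    then show "\<rho>Q h s1 * pol s1 a * (\<Sum>s\<in>UNIV. \<bar>Q s1 a s - P s1 a s\<bar>) \<le> \<rho>Q h s1 * pol s1 a * \<epsilon>"
      using \<rho>Q_nonneg pol_nonneg Q_close by (intro mult_left_mono_if_pos) auto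
    show "\<bar>\<rho>P h s1 - \<rho>Q h s1\<bar> * pol s1 a * (\<Sum>s\<in>UNIV. P s1 a s) \<le> \<bar>\<rho>P h s1 - \<rho>Q h s1\<bar> * pol s1 a"
      using P_sum pol_nonneg by (intro mult_left_le) auto
  qed
  also have "\<dots> = (\<Sum>s1\<in>{x. layer x = h}. \<bar>\<rho>P h s1 - \<rho>Q h s1\<bar> + \<epsilon> * \<rho>Q h s1)"
    by (simp add: sum.distrib algebra_simps pol_sum flip: sum_distrib_left sum_distrib_right)
  also have "\<dots> \<le> (\<Sum>s\<in>UNIV. \<bar>\<rho>P h s - \<rho>Q h s\<bar> + \<epsilon> * \<rho>Q h s)"
    using \<open>0 \<le> \<epsilon>\<close> \<rho>Q_nonneg by (intro sum_mono2) auto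
  finally show ?thesis by (simp add: sum.distrib sum_distrib_left)
qed

lemma rho_layer_dist_le:
  assumes P_nonneg: "\<And>s a t. 0 \<le> P s a t" and P_sum: "\<And>s a. (\<Sum>t\<in>UNIV. P s a t) \<le> 1"
    and Q_nonneg: "\<And>s a t. 0 \<le> Q s a t" and Q_sum: "\<And>s a. (\<Sum>t\<in>UNIV. Q s a t) \<le> 1"
    and "0 \<le> \<epsilon>"
    and Q_close: "\<And>s a. 0 < rho_sa H layer s0 Q pol s a \<Longrightarrow> (\<Sum>t\<in>UNIV. \<bar>Q s a t - P s a t\<bar>) \<le> \<epsilon>"
  shows "(\<Sum>s\<in>UNIV. \<bar>rho_layer H layer s0 P pol h s - rho_layer H layer s0 Q pol h s\<bar>)
    \<le> real h * \<epsilon> / real H"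
proof (induction h)
  case (Suc h)
  have "\<epsilon> * (\<Sum>s\<in>UNIV. rho_layer H layer s0 Q pol h s) \<le> \<epsilon> / real H"
    using mult_left_mono[OF rho_layer_mass_le[where P = Q, OF Q_nonneg Q_sum] \<open>0 \<le> \<epsilon>\<close>] by simp
  then show ?case
    using rho_layer_dist_Suc_le[where P = P and Q = Q and h = h, OF P_nonneg P_sum Q_nonneg \<open>0 \<le> \<epsilon>\<close> Q_close] Suc
    by (simp add: add_divide_distrib algebra_simps)
qed simp

lemma rho_s_dist_le:
  assumes layers: "\<And>s. layer s < H"
    and P_nonneg: "\<And>s a t. 0 \<le> P s a t" and P_sum: "\<And>s a. (\<Sum>t\<in>UNIV. P s a t) \<le> 1"
    and Q_nonneg: "\<And>s a t. 0 \<le> Q s a t" and Q_sum: "\<And>s a. (\<Sum>t\<in>UNIV. Q s a t) \<le> 1"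
    and "0 \<le> \<epsilon>"
    and Q_close: "\<And>s a. 0 < rho_sa H layer s0 Q pol s a \<Longrightarrow> (\<Sum>t\<in>UNIV. \<bar>Q s a t - P s a t\<bar>) \<le> \<epsilon>"
  shows "(\<Sum>s\<in>UNIV. \<bar>rho_s H layer s0 P pol s - rho_s H layer s0 Q pol s\<bar>) \<le> (real H - 1) / 2 * \<epsilon>"
proof -
  have "0 < H" using layers[of s0] by simp
  have gauss: "(\<Sum>h<n. real h) = real n * (real n - 1) / 2" for n
    by (induction n) (auto simp: field_simps)
  have "(\<Sum>s\<in>UNIV. \<bar>rho_s H layer s0 P pol s - rho_s H layer s0 Q pol s\<bar>)
      \<le> (\<Sum>h<H. \<Sum>s\<in>UNIV. \<bar>rho_layer H layer s0 P pol h s - rho_layer H layer s0 Q pol h s\<bar>)"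
    unfolding rho_s_def by (rule sum_by_layer_le[OF layers]) simp
  also have "\<dots> \<le> (\<Sum>h<H. real h * \<epsilon> / real H)"
    by (intro sum_mono rho_layer_dist_le assms)
  also have "\<dots> = (real H - 1) / 2 * \<epsilon>"
    using \<open>0 < H\<close> by (simp add: gauss flip: sum_divide_distrib sum_distrib_right)
  finally show ?thesis .
qed

lemma rho_s_mass_le:
  assumes layers: "\<And>s. layer s < H"
    and Q_nonneg: "\<And>s a t. 0 \<le> Q s a t" and Q_sum: "\<And>s a. (\<Sum>t\<in>UNIV. Q s a t) \<le> 1"
  shows "(\<Sum>s\<in>UNIV. rho_s H layer s0 Q pol s) \<le> 1"
proof -
  have "0 < H" using layers[of s0] by simp
  have "(\<Sum>s\<in>UNIV. rho_s H layer s0 Q pol s) \<le> (\<Sum>h<H. \<Sum>s\<in>UNIV. rho_layer H layer s0 Q pol h s)"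
    unfolding rho_s_def by (intro sum_by_layer_le layers rho_layer_nonneg Q_nonneg)
  also have "\<dots> \<le> (\<Sum>h<H. 1 / real H)"
    by (intro sum_mono rho_layer_mass_le Q_nonneg Q_sum)
  finally show ?thesis using \<open>0 < H\<close> by simp
qed

lemma rho_sar_dist_le:
  fixes R R' :: "'s \<Rightarrow> 'a \<Rightarrow> 'r::finite \<Rightarrow> real"
  assumes Q_nonneg: "\<And>s a t. 0 \<le> Q s a t"
    and R_nonneg: "\<And>s a r. 0 \<le> R s a r" and R_sum: "\<And>s a. (\<Sum>r\<in>UNIV. R s a r) = 1"
    and R'_close: "\<And>s a r. 0 < rho_sa H layer s0 Q pol s a \<Longrightarrow> \<bar>R' s a r - R s a r\<bar> \<le> \<epsilon>"
  shows "(\<Sum>s\<in>UNIV. \<Sum>a\<in>UNIV. \<Sum>r\<in>UNIV.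
            \<bar>rho_sar H layer s0 P R pol s a r - rho_sar H layer s0 Q R' pol s a r\<bar>)
    \<le> (\<Sum>s\<in>UNIV. \<bar>rho_s H layer s0 P pol s - rho_s H layer s0 Q pol s\<bar>)
       + real (card (UNIV :: 'r set)) * \<epsilon> * (\<Sum>s\<in>UNIV. rho_s H layer s0 Q pol s)"
proof -
  define \<Delta> where "\<Delta> s = \<bar>rho_s H layer s0 P pol s - rho_s H layer s0 Q pol s\<bar>" for s
  define \<rho>Q where "\<rho>Q s = rho_s H layer s0 Q pol s" for s
  have \<rho>Q_nonneg: "0 \<le> \<rho>Q s" for s
    unfolding \<rho>Q_def rho_s_def by (rule rho_layer_nonneg[OF Q_nonneg])
  have pointwise: "\<bar>rho_sar H layer s0 P R pol s a r - rho_sar H layer s0 Q R' pol s a r\<bar>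
      \<le> \<Delta> s * pol s a * R s a r + \<rho>Q s * pol s a * \<epsilon>" for s a r
  proof -
    have "\<rho>Q s * pol s a * \<bar>R s a r - R' s a r\<bar> \<le> \<rho>Q s * pol s a * \<epsilon>"
      using \<rho>Q_nonneg[of s] pol_nonneg[of s a] R'_close[of s a r]
      by (intro mult_left_mono_if_pos) (auto simp: rho_sa_def \<rho>Q_def abs_minus_commute)
    moreover have "rho_sar H layer s0 P R pol s a r - rho_sar H layer s0 Q R' pol s a r
        = (rho_s H layer s0 P pol s - \<rho>Q s) * pol s a * R s a r + \<rho>Q s * pol s a * (R s a r - R' s a r)"
      by (simp add: rho_sar_def rho_sa_def \<rho>Q_def algebra_simps)
    ultimately show ?thesis
      using pol_nonneg[of s a] R_nonneg[of s a r] \<rho>Q_nonneg[of s] abs_triangle_ineq[of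
        "(rho_s H layer s0 P pol s - \<rho>Q s) * pol s a * R s a r" "\<rho>Q s * pol s a * (R s a r - R' s a r)"]
      by (simp add: \<Delta>_def \<rho>Q_def abs_mult)
  qed
  have "(\<Sum>s\<in>UNIV. \<Sum>a\<in>UNIV. \<Sum>r\<in>UNIV.
            \<bar>rho_sar H layer s0 P R pol s a r - rho_sar H layer s0 Q R' pol s a r\<bar>)
      \<le> (\<Sum>s\<in>UNIV. \<Sum>a\<in>UNIV. \<Sum>r\<in>UNIV. \<Delta> s * pol s a * R s a r + \<rho>Q s * pol s a * \<epsilon>)"
    by (intro sum_mono pointwise)
  also have "\<dots> = (\<Sum>s\<in>UNIV. \<Delta> s + real (card (UNIV :: 'r set)) * \<epsilon> * \<rho>Q s)"
    by (simp add: sum.distrib R_sum pol_sum algebra_simps flip: sum_distrib_left sum_distrib_right)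
  finally show ?thesis
    by (simp add: \<Delta>_def \<rho>Q_def sum.distrib sum_distrib_left)
qed

lemma visitation_dist_le:
  fixes R R' :: "'s \<Rightarrow> 'a \<Rightarrow> 'r::finite \<Rightarrow> real"
  assumes layers: "\<And>s. layer s < H"
    and P_nonneg: "\<And>s a t. 0 \<le> P s a t" and P_sum: "\<And>s a. (\<Sum>t\<in>UNIV. P s a t) \<le> 1"
    and Q_nonneg: "\<And>s a t. 0 \<le> Q s a t" and Q_sum: "\<And>s a. (\<Sum>t\<in>UNIV. Q s a t) \<le> 1"
    and R_nonneg: "\<And>s a r. 0 \<le> R s a r" and R_sum: "\<And>s a. (\<Sum>r\<in>UNIV. R s a r) = 1"
    and "0 \<le> \<epsilon>\<^sub>P" and "0 \<le> \<epsilon>\<^sub>R"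
    and Q_close: "\<And>s a. 0 < rho_sa H layer s0 Q pol s a \<Longrightarrow> (\<Sum>t\<in>UNIV. \<bar>Q s a t - P s a t\<bar>) \<le> \<epsilon>\<^sub>P"
    and R'_close: "\<And>s a r. 0 < rho_sa H layer s0 Q pol s a \<Longrightarrow> \<bar>R' s a r - R s a r\<bar> \<le> \<epsilon>\<^sub>R"
  shows "(\<Sum>s\<in>UNIV. \<bar>rho_s H layer s0 P pol s - rho_s H layer s0 Q pol s\<bar>)
       + (\<Sum>s\<in>UNIV. \<Sum>a\<in>UNIV. \<Sum>r\<in>UNIV.
            \<bar>rho_sar H layer s0 P R pol s a r - rho_sar H layer s0 Q R' pol s a r\<bar>)
    \<le> 2 * ((real H - 1) / 2 * \<epsilon>\<^sub>P) + real (card (UNIV :: 'r set)) * \<epsilon>\<^sub>R"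
proof -
  let ?cR = "real (card (UNIV :: 'r set))"
  have "(\<Sum>s\<in>UNIV. \<bar>rho_s H layer s0 P pol s - rho_s H layer s0 Q pol s\<bar>) \<le> (real H - 1) / 2 * \<epsilon>\<^sub>P"
    using assms by (intro rho_s_dist_le)
  moreover have "?cR * \<epsilon>\<^sub>R * (\<Sum>s\<in>UNIV. rho_s H layer s0 Q pol s) \<le> ?cR * \<epsilon>\<^sub>R"
    using rho_s_mass_le[OF layers Q_nonneg Q_sum] \<open>0 \<le> \<epsilon>\<^sub>R\<close> by (simp add: mult_left_le)
  ultimately show ?thesis
    using rho_sar_dist_le[where P = P and Q = Q and R = R and R' = R', OF Q_nonneg R_nonneg R_sum R'_close] by linarith
qed

lemma ex_rho_sa_init_pos:
  assumes "0 < H" and "layer s0 = 0"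
  obtains a where "0 < rho_sa H layer s0 Q pol s0 a"
proof -
  have "\<not> (\<forall>a. pol s0 a \<le> 0)"
    using pol_sum[of s0] sum_nonpos[of UNIV "pol s0"] by auto
  then obtain a where "0 < pol s0 a" by (auto simp: not_le)
  then show ?thesis
    using assms by (intro that[of a]) (simp add: rho_sa_def rho_s_def)
qed

end

theorem lemma6:
  fixes H :: nat and layer :: "'s::finite \<Rightarrow> nat" and s0 :: 's
    and P :: "'s \<Rightarrow> 'a::finite \<Rightarrow> 's \<Rightarrow> real"
    and R :: "'s \<Rightarrow> 'a \<Rightarrow> 'r::finite \<Rightarrow> real"
    and pol :: "'s \<Rightarrow> 'a \<Rightarrow> real"
    and D :: "('s,'a,'r) dataset"
    and epsP epsR :: real
  assumes layers: "\<forall>s. layer s < H" and init: "layer s0 = 0"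
    and P_nonneg: "\<forall>s a t. P s a t \<ge> 0" and P_sum: "\<forall>s a. (\<Sum>t\<in>UNIV. P s a t) = 1"
    and R_nonneg: "\<forall>s a r. R s a r \<ge> 0" and R_sum: "\<forall>s a. (\<Sum>r\<in>UNIV. R s a r) = 1"
    and pol_nonneg: "\<forall>s a. pol s a \<ge> 0" and pol_sum: "\<forall>s. (\<Sum>a\<in>UNIV. pol s a) = 1"
    and bc: "batch_constrained D pol"
    and hP: "\<forall>s a. rho_sa H layer s0 (P_D D) pol s a > 0 \<longrightarrow>
               (\<Sum>t\<in>UNIV. \<bar>P_D D s a t - P s a t\<bar>) \<le> epsP"
    and hR: "\<forall>s a r. rho_sa H layer s0 (P_D D) pol s a > 0 \<longrightarrow>
               \<bar>R_D D s a r - R s a r\<bar> \<le> epsR"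
  shows "(\<Sum>s\<in>UNIV. \<bar>rho_s H layer s0 P pol s - rho_s H layer s0 (P_D D) pol s\<bar>)
       + (\<Sum>s\<in>UNIV. \<Sum>a\<in>UNIV. \<Sum>r\<in>UNIV.
            \<bar>rho_sar H layer s0 P R pol s a r - rho_sar H layer s0 (P_D D) (R_D D) pol s a r\<bar>)
       \<le> real (card (UNIV :: 's set)) * (real (card (UNIV :: 'a set)) * real (card (UNIV :: 'r set)) + 1) * ((real H - 1) / 2) * epsP
         + real (card (UNIV :: 's set)) * real (card (UNIV :: 'a set)) * real (card (UNIV :: 'r set)) * epsR"
proof -
  interpret layered_visitation H layer s0 pol
    using pol_nonneg pol_sum by unfold_locales auto
  have "0 < H" using layers[rule_format, of s0] by simp
  obtain a0 where a0: "0 < rho_sa H layer s0 (P_D D) pol s0 a0"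
    using ex_rho_sa_init_pos[OF \<open>0 < H\<close> init] .
  have "0 \<le> epsP" using hP a0 by (meson order_trans sum_nonneg abs_ge_zero)
  have "0 \<le> epsR" using hR a0 by (meson order_trans abs_ge_zero)
  have "(\<Sum>s\<in>UNIV. \<bar>rho_s H layer s0 P pol s - rho_s H layer s0 (P_D D) pol s\<bar>)
       + (\<Sum>s\<in>UNIV. \<Sum>a\<in>UNIV. \<Sum>r\<in>UNIV.
            \<bar>rho_sar H layer s0 P R pol s a r - rho_sar H layer s0 (P_D D) (R_D D) pol s a r\<bar>)
      \<le> 2 * ((real H - 1) / 2 * epsP) + real (card (UNIV :: 'r set)) * epsR"
    using layers P_nonneg P_sum R_nonneg R_sum hP hR \<open>0 \<le> epsP\<close> \<open>0 \<le> epsR\<close>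
    by (intro visitation_dist_le P_D_nonneg P_D_sum_le_1) auto
  also have "\<dots> \<le> real (card (UNIV :: 's set)) * (real (card (UNIV :: 'a set)) * real (card (UNIV :: 'r set)) + 1) * ((real H - 1) / 2 * epsP)
         + real (card (UNIV :: 's set)) * real (card (UNIV :: 'a set)) * real (card (UNIV :: 'r set)) * epsR"
    using \<open>0 < H\<close> \<open>0 \<le> epsP\<close> \<open>0 \<le> epsR\<close> by (intro card_UNIV_constants_le) simp_all
  finally show ?thesis by (simp only: mult.assoc)
qed

end
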